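(* Let $\mu>0$, $u_a\in\mathbb{R}$, $\omega_0\ge0$, $\sigma_0\in\mathbb{R}$, and let $\alpha_l,\alpha_r,u_l,u_r$ be continuous functions on $[0,\infty)$ with $\alpha_l(t),\alpha_r(t)>0$ and $u_l(t)>u_r(t)$ for all $t\ge0$. Suppose $(\omega,\sigma)\in\mathcal{C}^1([0,\infty))^2$ solves $$\frac{d\omega}{dt}=(\alpha_r-\alpha_l)\sigma-(\alpha_ru_r-\alpha_lu_l),\quad \frac{d(\omega\sigma)}{dt}=(\alpha_ru_r-\alpha_lu_l)\sigma-(\alpha_ru_r^2-\alpha_lu_l^2)+\mu(u_a-\sigma)\omega,$$ with $\omega(0)=\omega_0$, $\sigma(0)\omega(0)=\sigma_0\omega_0$. If $u_r(t)<\sigma(t)<u_l(t)$ for all $t\ge0$, then $\omega(t_2)>\omega(t_1)$ whenever $t_2>t_1\ge0$. In particular, in the Riemann case $\alpha_l\equiv\alpha_->0$, $\alpha_r\equiv\alpha_+>0$, $u_l(t)=u_a+(u_--u_a)e^{-\mu t}$, $u_r(t)=u_a+(u_+-u_a)e^{-\mu t}$ with $u_->u_+$, one has $\omega(t)\ge\omega_0+\frac{K(1-e^{-\mu t})}{\mu}$ for all $t\ge0$, where $K=\min\{\alpha_-,\alpha_+\}(u_--u_+)$. *)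

theory Defs
  imports Complex_Main
begin

end

theory Submission
  imports Defs "HOL-Analysis.Analysis"
begin

text \<open>Rewriting the flux as \<open>\<alpha>\<^sub>r (\<sigma> - u\<^sub>r) + \<alpha>\<^sub>l (u\<^sub>l - \<sigma>)\<close> shows that \<open>d\<omega>/dt\<close> is at least
  \<open>min \<alpha>\<^sub>l \<alpha>\<^sub>r (u\<^sub>l - u\<^sub>r) > 0\<close> while \<open>\<sigma>\<close> stays strictly between \<open>u\<^sub>r\<close> and \<open>u\<^sub>l\<close>. In the Riemann case \<open>u\<^sub>l - u\<^sub>r = (u\<^sub>- - u\<^sub>+) e\<^sup>-\<^sup>\<mu>\<^sup>t\<close>, and integrating the
  lower bound \<open>K e\<^sup>-\<^sup>\<mu>\<^sup>t\<close> gives the estimate.\<close>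

lemma flux_ge_min_weight:
  fixes al ar ul ur s :: real
  assumes "0 < al" "0 < ar" "ur < s" "s < ul"
  shows "min al ar * (ul - ur) \<le> (ar - al) * s - (ar * ur - al * ul)"
proof -
  have "min al ar * (ul - ur) = min al ar * (s - ur) + min al ar * (ul - s)"
    by (simp add: algebra_simps)
  also have "\<dots> \<le> ar * (s - ur) + al * (ul - s)"
    using assms by (intro add_mono mult_right_mono) (auto simp: min_def)
  also have "\<dots> = (ar - al) * s - (ar * ur - al * ul)"
    by (simp add: algebra_simps)
  finally show ?thesis .
qed

lemma continuous_on_atLeast_if_has_derivative:
  fixes f :: "real \<Rightarrow> real"
  assumes "\<And>t. t \<ge> a \<Longrightarrow> (f has_real_derivative f' t) (at t within {a..})"
  shows "continuous_on {a..} f"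
  unfolding continuous_on_eq_continuous_within by (auto intro: DERIV_continuous assms)

lemma DERIV_atLeast_interior:
  fixes f :: "real \<Rightarrow> real"
  assumes "a < t" "(f has_real_derivative D) (at t within {a..})"
  shows "DERIV f t :> D"
proof -
  have "at t within {a..} = at t"
    by (rule at_within_interior) (use assms(1) in simp)
  with assms(2) show ?thesis by simp
qed

lemma DERIV_pos_imp_strict_mono_atLeast:
  fixes f :: "real \<Rightarrow> real"
  assumes der: "\<And>t. t \<ge> a \<Longrightarrow> (f has_real_derivative f' t) (at t within {a..})"
    and pos: "\<And>t. t \<ge> a \<Longrightarrow> f' t > 0"
    and "a \<le> x" "x < y"
  shows "f x < f y"
proof (rule DERIV_pos_imp_increasing_open[of x y f])
  show "\<exists>D. DERIV f t :> D \<and> 0 < D" if "x < t" "t < y" for t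
  proof -
    have "a < t"
      using that \<open>a \<le> x\<close> by simp
    then have "DERIV f t :> f' t"
      using der[of t] by (intro DERIV_atLeast_interior) auto
    with pos[of t] \<open>a < t\<close> show ?thesis
      by auto
  qed
  have "continuous_on {a..} f"
    by (rule continuous_on_atLeast_if_has_derivative) (rule der)
  then show "continuous_on {x..y} f"
    by (rule continuous_on_subset) (use \<open>a \<le> x\<close> in auto)
qed fact

lemma DERIV_nonneg_imp_mono_atLeast:
  fixes f :: "real \<Rightarrow> real"
  assumes der: "\<And>t. t \<ge> a \<Longrightarrow> (f has_real_derivative f' t) (at t within {a..})"
    and nonneg: "\<And>t. t \<ge> a \<Longrightarrow> f' t \<ge> 0"
    and "a \<le> x" "x \<le> y"
  shows "f x \<le> f y"
proof (rule DERIV_nonneg_imp_increasing_open[of x y f])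
  show "\<exists>D. DERIV f t :> D \<and> 0 \<le> D" if "x < t" "t < y" for t
  proof -
    have "a < t"
      using that \<open>a \<le> x\<close> by simp
    then have "DERIV f t :> f' t"
      using der[of t] by (intro DERIV_atLeast_interior) auto
    with nonneg[of t] \<open>a < t\<close> show ?thesis
      by auto
  qed
  have "continuous_on {a..} f"
    by (rule continuous_on_atLeast_if_has_derivative) (rule der)
  then show "continuous_on {x..y} f"
    by (rule continuous_on_subset) (use \<open>a \<le> x\<close> in auto)
qed fact

lemma has_real_derivative_exp_decay_integral:
  fixes \<mu> K :: real
  assumes "\<mu> \<noteq> 0"
  shows "((\<lambda>s. K * (1 - exp (- \<mu> * s)) / \<mu>) has_real_derivative K * exp (- \<mu> * t)) (at t within S)"
proof -
  have "((\<lambda>s. K * (1 - exp (- \<mu> * s)) / \<mu>) has_real_derivative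
          K * (0 - exp (- \<mu> * t) * (- \<mu> * 1)) / \<mu>) (at t within S)"
    using assms by (intro derivative_eq_intros) auto
  then show ?thesis
    using assms by simp
qed

theorem mainTheorem12:
  fixes \<mu> ua \<omega>0 \<sigma>0 :: real
    and \<alpha>l \<alpha>r ul ur \<omega> \<sigma> d\<omega> d\<sigma> :: "real \<Rightarrow> real"
  assumes mu_pos: "\<mu> > 0"
    and omega0_nonneg: "\<omega>0 \<ge> 0"
    and cont_data: "continuous_on {0..} \<alpha>l" "continuous_on {0..} \<alpha>r"
                   "continuous_on {0..} ul" "continuous_on {0..} ur"
    and alpha_pos: "\<And>t. t \<ge> 0 \<Longrightarrow> \<alpha>l t > 0 \<and> \<alpha>r t > 0"
    and ul_gt_ur: "\<And>t. t \<ge> 0 \<Longrightarrow> ul t > ur t"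
    and C1: "continuous_on {0..} d\<omega>" "continuous_on {0..} d\<sigma>"
    and der_omega: "\<And>t. t \<ge> 0 \<Longrightarrow> (\<omega> has_real_derivative d\<omega> t) (at t within {0..})"
    and der_sigma: "\<And>t. t \<ge> 0 \<Longrightarrow> (\<sigma> has_real_derivative d\<sigma> t) (at t within {0..})"
    and eq_omega: "\<And>t. t \<ge> 0 \<Longrightarrow>
        d\<omega> t = (\<alpha>r t - \<alpha>l t) * \<sigma> t - (\<alpha>r t * ur t - \<alpha>l t * ul t)"
    and eq_omega_sigma: "\<And>t. t \<ge> 0 \<Longrightarrow>
        ((\<lambda>s. \<omega> s * \<sigma> s) has_real_derivative
           ((\<alpha>r t * ur t - \<alpha>l t * ul t) * \<sigma> t - (\<alpha>r t * (ur t)\<^sup>2 - \<alpha>l t * (ul t)\<^sup>2)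
            + \<mu> * (ua - \<sigma> t) * \<omega> t)) (at t within {0..})"
    and init: "\<omega> 0 = \<omega>0" "\<sigma> 0 * \<omega> 0 = \<sigma>0 * \<omega>0"
    and sigma_between: "\<And>t. t \<ge> 0 \<Longrightarrow> ur t < \<sigma> t \<and> \<sigma> t < ul t"
  shows "(\<forall>t1 t2. 0 \<le> t1 \<and> t1 < t2 \<longrightarrow> \<omega> t1 < \<omega> t2) \<and>
         (\<forall>am ap um up. am > 0 \<longrightarrow> ap > 0 \<longrightarrow> um > up \<longrightarrow>
            (\<forall>t\<ge>0. \<alpha>l t = am \<and> \<alpha>r t = ap \<and>
                     ul t = ua + (um - ua) * exp (- \<mu> * t) \<and>
                     ur t = ua + (up - ua) * exp (- \<mu> * t)) \<longrightarrow>
            (\<forall>t\<ge>0. \<omega> t \<ge> \<omega>0 + min am ap * (um - up) * (1 - exp (- \<mu> * t)) / \<mu>))"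
proof (intro conjI allI impI)
  have flux_bound: "min (\<alpha>l t) (\<alpha>r t) * (ul t - ur t) \<le> d\<omega> t" if "t \<ge> 0" for t
    unfolding eq_omega[OF that]
    using alpha_pos[OF that] sigma_between[OF that] by (intro flux_ge_min_weight) auto
  show "\<omega> t1 < \<omega> t2" if "0 \<le> t1 \<and> t1 < t2" for t1 t2
  proof (rule DERIV_pos_imp_strict_mono_atLeast[OF der_omega])
    show "d\<omega> t > 0" if "t \<ge> 0" for t
    proof -
      have "0 < min (\<alpha>l t) (\<alpha>r t) * (ul t - ur t)"
        using alpha_pos[OF that] ul_gt_ur[OF that] by simp
      with flux_bound[OF that] show ?thesis by linarith
    qed
  qed (use that in auto)
  fix am ap um up t :: real
  assume riemann: "\<forall>t\<ge>0. \<alpha>l t = am \<and> \<alpha>r t = ap \<and>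
                     ul t = ua + (um - ua) * exp (- \<mu> * t) \<and>
                     ur t = ua + (up - ua) * exp (- \<mu> * t)"
    and "t \<ge> 0"
  define K where "K = min am ap * (um - up)"
  have dominated: "K * exp (- \<mu> * s) \<le> d\<omega> s" if "s \<ge> 0" for s
  proof -
    have "\<alpha>l s = am" "\<alpha>r s = ap"
      and ul: "ul s = ua + (um - ua) * exp (- \<mu> * s)"
      and ur: "ur s = ua + (up - ua) * exp (- \<mu> * s)"
      using riemann that by auto
    moreover have "ul s - ur s = (um - up) * exp (- \<mu> * s)"
      unfolding ul ur by (simp add: left_diff_distrib)
    ultimately have "min (\<alpha>l s) (\<alpha>r s) * (ul s - ur s) = K * exp (- \<mu> * s)"
      unfolding K_def by simp
    with flux_bound[OF that] show ?thesis by simp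
  qed
  define g where "g s = \<omega> s - K * (1 - exp (- \<mu> * s)) / \<mu>" for s
  have "g 0 \<le> g t"
  proof (rule DERIV_nonneg_imp_mono_atLeast[where f = g and a = 0])
    show "(g has_real_derivative d\<omega> s - K * exp (- \<mu> * s)) (at s within {0..})"
      if "s \<ge> 0" for s
      unfolding g_def[abs_def] using mu_pos
      by (intro DERIV_diff der_omega[OF that] has_real_derivative_exp_decay_integral) simp
  qed (use dominated \<open>t \<ge> 0\<close> in auto)
  then show "\<omega> t \<ge> \<omega>0 + min am ap * (um - up) * (1 - exp (- \<mu> * t)) / \<mu>"
    unfolding g_def K_def init(1) by simp
qed

end
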